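(* Let $0<\epsilon<1$ be a fixed constant and let $f:\{0,1\}^n\to\{0,1\}$ be unate. Then $\widetilde{\deg}(f)\le O(M_\epsilon(f)^4)$.
   Context: For $f:\{0,1\}^n\to\{0,1\}$ and $0<\epsilon<1$, $\mathsf N_\epsilon(f)$ is the minimum degree of a real polynomial $p$ such that $|p(x)|\le\epsilon$ whenever $f(x)=0$ and $|p(x)|\ge1$ whenever $f(x)=1$. $\overline f=1-f$ and $M_\epsilon(f):=\max\{\mathsf N_\epsilon(f),\mathsf N_\epsilon(\overline f)\}$. $\widetilde{\deg}(f)$ is the minimum degree of a real polynomial $p$ with $|f(x)-p(x)|\le1/3$ for all $x\in\{0,1\}^n$. $f$ is unate if there exist $a\in\{0,1\}^n$ and a monotone (increasing or decreasing in the coordinatewise order) Boolean function $g$ with $f(x)=g(x\oplus a)$ for all $x$. The constant in $O(\cdot)$ may depend on $\epsilon$. *)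

theory Defs
  imports Complex_Main
begin

text \<open>Points of the Boolean cube {0,1}^n are encoded as x :: nat \<Rightarrow> bool with x i = False
  for all i \<ge> n (True = 1, False = 0).\<close>

definition cube :: "nat \<Rightarrow> (nat \<Rightarrow> bool) set" where
  "cube n = {x. \<forall>i\<ge>n. \<not> x i}"

text \<open>On the cube every real polynomial agrees with a multilinear one of no larger degree, so it
  suffices to consider linear combinations of monomials prod_{i in S} x_i with |S| \<le> d.\<close>

definition poly_deg_le :: "nat \<Rightarrow> nat \<Rightarrow> ((nat \<Rightarrow> bool) \<Rightarrow> real) \<Rightarrow> bool" where
  "poly_deg_le n d p \<longleftrightarrow>
     (\<exists>c :: nat set \<Rightarrow> real. \<forall>x\<in>cube n.
        p x = (\<Sum>S\<in>{S. S \<subseteq> {..<n} \<and> card S \<le> d}. c S * (\<Prod>i\<in>S. if x i then 1 else 0)))"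

definition approx_deg :: "nat \<Rightarrow> ((nat \<Rightarrow> bool) \<Rightarrow> bool) \<Rightarrow> nat" where
  "approx_deg n f = (LEAST d. \<exists>p. poly_deg_le n d p \<and>
      (\<forall>x\<in>cube n. \<bar>(if f x then 1 else 0) - p x\<bar> \<le> 1/3))"

definition N_deg :: "real \<Rightarrow> nat \<Rightarrow> ((nat \<Rightarrow> bool) \<Rightarrow> bool) \<Rightarrow> nat" where
  "N_deg eps n f = (LEAST d. \<exists>p. poly_deg_le n d p \<and>
      (\<forall>x\<in>cube n. (\<not> f x \<longrightarrow> \<bar>p x\<bar> \<le> eps) \<and> (f x \<longrightarrow> \<bar>p x\<bar> \<ge> 1)))"

definition M_deg :: "real \<Rightarrow> nat \<Rightarrow> ((nat \<Rightarrow> bool) \<Rightarrow> bool) \<Rightarrow> nat" where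
  "M_deg eps n f = max (N_deg eps n f) (N_deg eps n (\<lambda>x. \<not> f x))"

definition unate :: "nat \<Rightarrow> ((nat \<Rightarrow> bool) \<Rightarrow> bool) \<Rightarrow> bool" where
  "unate n f \<longleftrightarrow> (\<exists>a\<in>cube n. \<exists>g :: (nat \<Rightarrow> bool) \<Rightarrow> bool.
      (monotone_on (cube n) (\<le>) (\<le>) g \<or> monotone_on (cube n) (\<le>) (\<ge>) g) \<and>
      (\<forall>x\<in>cube n. f x = g (\<lambda>i. x i \<noteq> a i)))"

end

theory Submission
  imports Defs "HOL-Computational_Algebra.Polynomial"
begin

text \<open>
  If every 1-input of \<open>g\<close> has a certificate of size \<open>a\<close> and every 0-input one of size \<open>b\<close>,
  then \<open>g\<close> has exact degree at most \<open>a b\<close>: a 1-certificate meets every 0-certificate, so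
  on each subcube obtained by fixing it the 0-certificate complexity drops.

  Up to flipping coordinates a unate function is increasing. For increasing \<open>g\<close>, a minimal
  1-input \<open>1\<^sub>S\<close> below a 1-input \<open>x\<close> certifies \<open>x\<close>, and every point strictly below \<open>1\<^sub>S\<close>
  is a 0-input. If \<open>|p| \<ge> 1\<close> on 1-inputs and \<open>|p| \<le> \<epsilon>\<close> on 0-inputs, averaging \<open>p\<close> over the
  \<open>j\<close>-subsets of \<open>S\<close> gives a univariate \<open>q\<close> with \<open>deg q \<le> deg p\<close>, \<open>|q 0| \<ge> 1\<close> and
  \<open>|q j| \<le> \<epsilon>\<close> for \<open>1 \<le> j \<le> |S|\<close>; Lagrange interpolation at suitably spread integer nodes
  then forces \<open>|S| \<le> K (deg p)\<^sup>2\<close> with \<open>K\<close> depending only on \<open>\<epsilon>\<close>. Hence \<open>C\<^sub>1(f) \<le> K N\<^sub>\<epsilon>(f)\<^sup>2\<close>, \<open>C\<^sub>0(f) \<le> K N\<^sub>\<epsilon>(\<not>f)\<^sup>2\<close>,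
  and the approximate degree is at most \<open>K\<^sup>2 M\<^sub>\<epsilon>(f)\<^sup>4\<close>.
\<close>

section \<open>Polynomials on the Boolean cube\<close>

lemma sum_eq_single:
  "finite A \<Longrightarrow> a \<in> A \<Longrightarrow> (\<And>y. y \<in> A \<Longrightarrow> y \<noteq> a \<Longrightarrow> g y = 0) \<Longrightarrow> sum g A = g a"
  using sum.mono_neutral_left[of A "{a}" g] by auto

definition monomial :: "nat set \<Rightarrow> (nat \<Rightarrow> bool) \<Rightarrow> real" where
  "monomial S x = (\<Prod>i\<in>S. if x i then 1 else 0)"

definition small_sets :: "nat \<Rightarrow> nat \<Rightarrow> nat set set" where
  "small_sets n d = {S. S \<subseteq> {..<n} \<and> card S \<le> d}"

lemma finite_small_sets [simp]: "finite (small_sets n d)"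
  unfolding small_sets_def by (rule finite_subset[of _ "Pow {..<n}"]) auto

lemma finite_of_small_sets: "S \<in> small_sets n d \<Longrightarrow> finite S"
  unfolding small_sets_def by (auto intro: finite_subset)

lemma poly_deg_le_iff:
  "poly_deg_le n d p \<longleftrightarrow> (\<exists>c. \<forall>x\<in>cube n. p x = (\<Sum>S\<in>small_sets n d. c S * monomial S x))"
  unfolding poly_deg_le_def small_sets_def monomial_def by simp

lemma monomial_eq: "finite S \<Longrightarrow> monomial S x = (if \<forall>i\<in>S. x i then 1 else 0)"
  unfolding monomial_def by (auto intro: prod.neutral prod_zero)

lemma monomial_mult: "finite S \<Longrightarrow> finite T \<Longrightarrow> monomial S x * monomial T x = monomial (S \<union> T) x"
  by (auto simp: monomial_eq)

lemma poly_deg_le_sum_monomials: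
  assumes "finite I" and "\<And>j. j \<in> I \<Longrightarrow> T j \<subseteq> {..<n} \<and> card (T j) \<le> d"
    and "\<And>x. x \<in> cube n \<Longrightarrow> p x = (\<Sum>j\<in>I. c j * monomial (T j) x)"
  shows "poly_deg_le n d p"
proof -
  define c' where "c' S = (\<Sum>j\<in>{j\<in>I. T j = S}. c j)" for S
  have T: "T ` I \<subseteq> small_sets n d" using assms(2) unfolding small_sets_def by auto
  have "p x = (\<Sum>S\<in>small_sets n d. c' S * monomial S x)" if "x \<in> cube n" for x
  proof -
    have "(\<Sum>S\<in>small_sets n d. c' S * monomial S x) =
        (\<Sum>S\<in>small_sets n d. \<Sum>j\<in>{j\<in>I. T j = S}. c j * monomial (T j) x)"
      unfolding c'_def sum_distrib_right by (intro sum.cong) auto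
    also have "\<dots> = (\<Sum>j\<in>I. c j * monomial (T j) x)"
      by (rule sum.group[OF \<open>finite I\<close> finite_small_sets T])
    finally show ?thesis using assms(3)[OF that] by simp
  qed
  then show ?thesis unfolding poly_deg_le_iff by blast
qed

lemma poly_deg_le_cong:
  "poly_deg_le n d p \<Longrightarrow> (\<And>x. x \<in> cube n \<Longrightarrow> p x = q x) \<Longrightarrow> poly_deg_le n d q"
  unfolding poly_deg_le_def by metis

lemma poly_deg_le_mono:
  assumes "poly_deg_le n d p" "d \<le> e"
  shows "poly_deg_le n e p"
proof -
  obtain c where "\<forall>x\<in>cube n. p x = (\<Sum>S\<in>small_sets n d. c S * monomial S x)"
    using assms(1) unfolding poly_deg_le_iff by blast
  then show ?thesis
    by (intro poly_deg_le_sum_monomials[of "small_sets n d" "\<lambda>S. S"]) (use assms(2) in \<open>auto simp: small_sets_def\<close>)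
qed

lemma poly_deg_le_const: "poly_deg_le n d (\<lambda>x. a)"
  by (rule poly_deg_le_sum_monomials[of "{()}" "\<lambda>_. {}" _ _ _ "\<lambda>_. a"]) (auto simp: monomial_def)

lemma poly_deg_le_add:
  assumes "poly_deg_le n d p" "poly_deg_le n d q"
  shows "poly_deg_le n d (\<lambda>x. p x + q x)"
proof -
  obtain c c' where "\<forall>x\<in>cube n. p x = (\<Sum>S\<in>small_sets n d. c S * monomial S x)"
    and "\<forall>x\<in>cube n. q x = (\<Sum>S\<in>small_sets n d. c' S * monomial S x)"
    using assms unfolding poly_deg_le_iff by blast
  then have "\<forall>x\<in>cube n. p x + q x = (\<Sum>S\<in>small_sets n d. (c S + c' S) * monomial S x)"
    by (simp add: sum.distrib distrib_right)
  then show ?thesis unfolding poly_deg_le_iff by (intro exI[of _ "\<lambda>S. c S + c' S"])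
qed

lemma poly_deg_le_scale: "poly_deg_le n d p \<Longrightarrow> poly_deg_le n d (\<lambda>x. a * p x)"
proof -
  assume "poly_deg_le n d p"
  then obtain c where "\<forall>x\<in>cube n. p x = (\<Sum>S\<in>small_sets n d. c S * monomial S x)"
    unfolding poly_deg_le_iff by blast
  then have "\<forall>x\<in>cube n. a * p x = (\<Sum>S\<in>small_sets n d. (a * c S) * monomial S x)"
    by (simp add: sum_distrib_left mult.assoc)
  then show ?thesis unfolding poly_deg_le_iff by (intro exI[of _ "\<lambda>S. a * c S"])
qed

lemma poly_deg_le_diff:
  "poly_deg_le n d p \<Longrightarrow> poly_deg_le n d q \<Longrightarrow> poly_deg_le n d (\<lambda>x. p x - q x)"
  using poly_deg_le_add[of n d p "\<lambda>x. (-1) * q x"] poly_deg_le_scale[of n d q "-1"] by simp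

lemma poly_deg_le_mult:
  assumes "poly_deg_le n d p" "poly_deg_le n e q"
  shows "poly_deg_le n (d + e) (\<lambda>x. p x * q x)"
proof -
  obtain c c' where c: "\<forall>x\<in>cube n. p x = (\<Sum>S\<in>small_sets n d. c S * monomial S x)"
    and c': "\<forall>x\<in>cube n. q x = (\<Sum>T\<in>small_sets n e. c' T * monomial T x)"
    using assms unfolding poly_deg_le_iff by blast
  let ?I = "small_sets n d \<times> small_sets n e"
  show ?thesis
  proof (rule poly_deg_le_sum_monomials[of ?I "\<lambda>(S, T). S \<union> T" _ _ _ "\<lambda>(S, T). c S * c' T"])
    show "\<And>j. j \<in> ?I \<Longrightarrow> (case j of (S, T) \<Rightarrow> S \<union> T) \<subseteq> {..<n} \<and>
        card (case j of (S, T) \<Rightarrow> S \<union> T) \<le> d + e"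
      unfolding small_sets_def by (auto intro: order.trans[OF card_Un_le])
    fix x assume "x \<in> cube n"
    then have "p x * q x = (\<Sum>S\<in>small_sets n d. \<Sum>T\<in>small_sets n e. (c S * monomial S x) * (c' T * monomial T x))"
      using c c' by (simp add: sum_product)
    also have "\<dots> = (\<Sum>S\<in>small_sets n d. \<Sum>T\<in>small_sets n e. c S * c' T * monomial (S \<union> T) x)"
      by (intro sum.cong refl) (simp add: monomial_mult[symmetric] finite_of_small_sets)
    finally have "p x * q x = \<dots>" .
    then show "p x * q x = (\<Sum>j\<in>?I. (case j of (S, T) \<Rightarrow> c S * c' T) * monomial (case j of (S, T) \<Rightarrow> S \<union> T) x)"
      by (simp add: sum.cartesian_product case_prod_beta)
  qed simp
qed

lemma poly_deg_le_sum:
  "finite K \<Longrightarrow> (\<And>k. k \<in> K \<Longrightarrow> poly_deg_le n d (p k)) \<Longrightarrow> poly_deg_le n d (\<lambda>x. \<Sum>k\<in>K. p k x)"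
  by (induction K rule: finite_induct) (auto intro: poly_deg_le_const poly_deg_le_add)

lemma poly_deg_le_prod:
  "finite K \<Longrightarrow> (\<And>k. k \<in> K \<Longrightarrow> poly_deg_le n (d k) (p k)) \<Longrightarrow>
    poly_deg_le n (\<Sum>k\<in>K. d k) (\<lambda>x. \<Prod>k\<in>K. p k x)"
  by (induction K rule: finite_induct) (auto intro: poly_deg_le_const poly_deg_le_mult)

lemma poly_deg_le_literal: "i < n \<Longrightarrow> poly_deg_le n 1 (\<lambda>x. if x i = b then 1 else 0)"
proof -
  assume "i < n"
  have var: "poly_deg_le n 1 (\<lambda>x. if x i then 1 else 0)"
    by (rule poly_deg_le_sum_monomials[of "{()}" "\<lambda>_. {i}" _ _ _ "\<lambda>_. 1"])
      (use \<open>i < n\<close> in \<open>auto simp: monomial_def\<close>)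
  show ?thesis
  proof (cases b)
    case False
    have "poly_deg_le n 1 (\<lambda>x. 1 - (if x i then 1 else 0))"
      by (rule poly_deg_le_diff[OF poly_deg_le_const var])
    then show ?thesis by (rule poly_deg_le_cong) (use False in auto)
  qed (use var in simp)
qed

lemma poly_deg_le_agree_indicator:
  assumes "M \<subseteq> {..<n}"
  shows "poly_deg_le n (card M) (\<lambda>x. if \<forall>i\<in>M. x i = y i then 1 else 0)"
proof -
  have "finite M" using assms finite_subset by blast
  have "poly_deg_le n (\<Sum>i\<in>M. 1) (\<lambda>x. \<Prod>i\<in>M. if x i = y i then 1 else 0)"
    by (rule poly_deg_le_prod[OF \<open>finite M\<close>]) (use assms poly_deg_le_literal in auto)
  then have "poly_deg_le n (card M) (\<lambda>x. \<Prod>i\<in>M. if x i = y i then 1 else 0)" by simp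
  then show ?thesis
    by (rule poly_deg_le_cong) (use \<open>finite M\<close> in \<open>auto intro: prod.neutral prod_zero\<close>)
qed

lemma cube_ext:
  assumes "x \<in> cube n" "y \<in> cube n" "\<And>i. i < n \<Longrightarrow> x i = y i"
  shows "x = y"
proof
  fix i show "x i = y i" using assms unfolding cube_def by (cases "i < n") auto
qed

lemma finite_cube [simp]: "finite (cube n)"
proof -
  have "cube n \<subseteq> (\<lambda>S i. i \<in> S) ` Pow {..<n}"
  proof
    fix x assume "x \<in> cube n"
    then have "x = (\<lambda>i. i \<in> {i. i < n \<and> x i})" unfolding cube_def by (auto simp: not_le[symmetric])
    then show "x \<in> (\<lambda>S i. i \<in> S) ` Pow {..<n}" by blast
  qed
  then show ?thesis by (rule finite_subset) simp
qed

lemma set_indicator_in_cube: "A \<subseteq> {..<n} \<Longrightarrow> (\<lambda>i. i \<in> A) \<in> cube n"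
  unfolding cube_def by auto

lemma poly_deg_le_dim: "poly_deg_le n n p"
proof -
  let ?agree = "\<lambda>x y. if \<forall>i\<in>{..<n}. x i = y i then 1 else 0 :: real"
  have "poly_deg_le n n (\<lambda>x. \<Sum>y\<in>cube n. p y * ?agree x y)"
    by (intro poly_deg_le_sum poly_deg_le_scale) (use poly_deg_le_agree_indicator[of "{..<n}" n] in auto)
  moreover have "(\<Sum>y\<in>cube n. p y * ?agree x y) = p x" if "x \<in> cube n" for x
    using that by (subst sum_eq_single[of _ x]) (auto dest: cube_ext)
  ultimately show ?thesis by (rule poly_deg_le_cong)
qed

definition flip :: "(nat \<Rightarrow> bool) \<Rightarrow> (nat \<Rightarrow> bool) \<Rightarrow> nat \<Rightarrow> bool" where
  "flip a x = (\<lambda>i. x i \<noteq> a i)"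

lemma flip_in_cube: "a \<in> cube n \<Longrightarrow> x \<in> cube n \<Longrightarrow> flip a x \<in> cube n"
  unfolding cube_def flip_def by auto

lemma flip_flip [simp]: "flip a (flip a x) = x"
  unfolding flip_def by auto

lemma poly_deg_le_flip:
  assumes "a \<in> cube n" and "poly_deg_le n d p"
  shows "poly_deg_le n d (\<lambda>x. p (flip a x))"
proof -
  obtain c where c: "\<forall>x\<in>cube n. p x = (\<Sum>S\<in>small_sets n d. c S * monomial S x)"
    using assms(2) unfolding poly_deg_le_iff by blast
  have "poly_deg_le n d (\<lambda>x. \<Sum>S\<in>small_sets n d. c S * (\<Prod>i\<in>S. if x i = (\<not> a i) then 1 else 0))"
  proof (intro poly_deg_le_sum poly_deg_le_scale finite_small_sets)
    fix S assume S: "S \<in> small_sets n d"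
    have "poly_deg_le n (\<Sum>i\<in>S. 1) (\<lambda>x. \<Prod>i\<in>S. if x i = (\<not> a i) then 1 else 0)"
      by (rule poly_deg_le_prod[OF finite_of_small_sets[OF S]])
        (use S poly_deg_le_literal in \<open>auto simp: small_sets_def\<close>)
    then show "poly_deg_le n d (\<lambda>x. \<Prod>i\<in>S. if x i = (\<not> a i) then 1 else 0)"
      by (rule poly_deg_le_mono) (use S in \<open>simp add: small_sets_def\<close>)
  qed
  then show ?thesis
    by (rule poly_deg_le_cong)
      (use c flip_in_cube[OF assms(1)] in \<open>auto simp: monomial_def flip_def intro!: sum.cong prod.cong\<close>)
qed

section \<open>Certificate complexity bounds the exact degree\<close>

definition certifies :: "nat \<Rightarrow> ((nat \<Rightarrow> bool) \<Rightarrow> bool) \<Rightarrow> nat set \<Rightarrow> (nat \<Rightarrow> bool) \<Rightarrow> bool" where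
  "certifies n g S x \<longleftrightarrow> (\<forall>y\<in>cube n. (\<forall>i\<in>S. y i = x i) \<longrightarrow> g y = g x)"

definition certificate_le :: "nat \<Rightarrow> ((nat \<Rightarrow> bool) \<Rightarrow> bool) \<Rightarrow> bool \<Rightarrow> nat \<Rightarrow> bool" where
  "certificate_le n g v a \<longleftrightarrow>
     (\<forall>x\<in>cube n. g x = v \<longrightarrow> (\<exists>S\<subseteq>{..<n}. card S \<le> a \<and> certifies n g S x))"

lemma certifies_not: "certifies n (\<lambda>x. \<not> g x) S x \<longleftrightarrow> certifies n g S x"
  unfolding certifies_def by simp

lemma certificate_le_not: "certificate_le n (\<lambda>x. \<not> g x) v a \<longleftrightarrow> certificate_le n g (\<not> v) a"
  unfolding certificate_le_def certifies_not by (metis (full_types))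

lemma certificate_le_flip:
  assumes a: "a \<in> cube n" and f: "\<And>x. x \<in> cube n \<Longrightarrow> f x = g (flip a x)"
    and "certificate_le n g v b"
  shows "certificate_le n f v b"
  unfolding certificate_le_def
proof (intro ballI impI)
  fix x assume "x \<in> cube n" "f x = v"
  then have "flip a x \<in> cube n" "g (flip a x) = v" using f flip_in_cube[OF a] by auto
  then obtain S where S: "S \<subseteq> {..<n}" "card S \<le> b" "certifies n g S (flip a x)"
    using assms(3) unfolding certificate_le_def by blast
  have "certifies n f S x"
    unfolding certifies_def
  proof (intro ballI impI)
    fix y assume "y \<in> cube n" "\<forall>i\<in>S. y i = x i"
    then have "flip a y \<in> cube n" "\<forall>i\<in>S. flip a y i = flip a x i"
      using flip_in_cube[OF a] unfolding flip_def by auto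
    then show "f y = f x"
      using S(3) f \<open>y \<in> cube n\<close> \<open>x \<in> cube n\<close> unfolding certifies_def by metis
  qed
  then show "\<exists>S\<subseteq>{..<n}. card S \<le> b \<and> certifies n f S x" using S by blast
qed

lemma certificates_intersect:
  assumes "x \<in> cube n" "y \<in> cube n" "g x \<noteq> g y" "certifies n g S x" "certifies n g T y"
  shows "S \<inter> T \<noteq> {}"
proof
  assume disjoint: "S \<inter> T = {}"
  define z where "z = override_on y x S"
  have "z \<in> cube n" using assms(1,2) unfolding z_def cube_def override_on_def by auto
  moreover have "\<forall>i\<in>S. z i = x i" "\<forall>i\<in>T. z i = y i"
    using disjoint unfolding z_def override_on_def by auto
  ultimately have "g z = g x" "g z = g y" using assms(4,5) unfolding certifies_def by blast+
  then show False using assms(3) by simp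
qed

lemma override_on_in_cube: "m \<subseteq> {..<n} \<Longrightarrow> x \<in> cube n \<Longrightarrow> override_on x r m \<in> cube n"
  unfolding cube_def override_on_def by auto

lemma certifies_override_on:
  assumes "m \<subseteq> {..<n}" "x \<in> cube n" "certifies n g S (override_on x r m)"
  shows "certifies n (\<lambda>y. g (override_on y r m)) (S - m) x"
  unfolding certifies_def
proof (intro ballI impI)
  fix y assume y: "y \<in> cube n" "\<forall>i\<in>S - m. y i = x i"
  then have "\<forall>i\<in>S. override_on y r m i = override_on x r m i" unfolding override_on_def by auto
  then show "g (override_on y r m) = g (override_on x r m)"
    using assms(3) override_on_in_cube[OF assms(1) y(1)] unfolding certifies_def by blast
qed

lemma certificate_le_override_on:
  assumes "m \<subseteq> {..<n}" "certificate_le n g v a"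
  shows "certificate_le n (\<lambda>y. g (override_on y r m)) v a"
  unfolding certificate_le_def
proof (intro ballI impI)
  fix x assume x: "x \<in> cube n" "g (override_on x r m) = v"
  then obtain S where S: "S \<subseteq> {..<n}" "card S \<le> a" "certifies n g S (override_on x r m)"
    using assms override_on_in_cube unfolding certificate_le_def by blast
  have "finite S" using S(1) finite_subset by blast
  then have "card (S - m) \<le> a" using S(2) card_mono[of S "S - m"] by auto
  then show "\<exists>S'\<subseteq>{..<n}. card S' \<le> a \<and> certifies n (\<lambda>y. g (override_on y r m)) S' x"
    using S(1) certifies_override_on[OF assms(1) x(1) S(3)] by (intro exI[of _ "S - m"]) auto
qed

text \<open>If \<open>m\<close> certifies a 1-input, it meets every 0-certificate, so fixing it
  shrinks the 0-certificates.\<close>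

lemma certificate_le_override_on_certificate:
  assumes m: "m \<subseteq> {..<n}" "w \<in> cube n" "g w" "certifies n g m w"
    and "certificate_le n g False (Suc b)"
  shows "certificate_le n (\<lambda>y. g (override_on y r m)) False b"
  unfolding certificate_le_def
proof (intro ballI impI)
  fix x assume x: "x \<in> cube n" "g (override_on x r m) = False"
  have x': "override_on x r m \<in> cube n" using override_on_in_cube[OF m(1) x(1)] .
  then obtain S where S: "S \<subseteq> {..<n}" "card S \<le> Suc b" "certifies n g S (override_on x r m)"
    using assms(5) x(2) unfolding certificate_le_def by blast
  have "S \<inter> m \<noteq> {}"
    using certificates_intersect[OF x' m(2) _ S(3) m(4)] x(2) m(3) by auto
  moreover have "finite S" using S(1) finite_subset by blast
  ultimately have "card (S - m) < card S" by (intro psubset_card_mono) auto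
  then show "\<exists>S'\<subseteq>{..<n}. card S' \<le> b \<and> certifies n (\<lambda>y. g (override_on y r m)) S' x"
    using S certifies_override_on[OF m(1) x(1) S(3)] by (intro exI[of _ "S - m"]) auto
qed

lemma indicator_split_on:
  assumes "finite m"
  shows "(if g x then 1 else 0) = (\<Sum>R\<in>Pow m.
    (if \<forall>i\<in>m. x i = (i \<in> R) then 1 else 0) * (if g (override_on x (\<lambda>i. i \<in> R) m) then 1 else (0::real)))"
proof -
  have "override_on x (\<lambda>i. i \<in> {i\<in>m. x i}) m = x" unfolding override_on_def by auto
  then show ?thesis using assms by (subst sum_eq_single[of _ "{i\<in>m. x i}"]) auto
qed

lemma poly_deg_le_constant_on_cube:
  "(\<And>x. x \<in> cube n \<Longrightarrow> g x = v) \<Longrightarrow> poly_deg_le n d (\<lambda>x. if g x then 1 else 0)"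
  by (rule poly_deg_le_cong[OF poly_deg_le_const[of n d "if v then 1 else 0"]]) auto

theorem poly_deg_le_certificate_complexity:
  "certificate_le n g True a \<Longrightarrow> certificate_le n g False b \<Longrightarrow>
    poly_deg_le n (a * b) (\<lambda>x. if g x then 1 else 0)"
proof (induction b arbitrary: g)
  case 0
  show ?case
  proof (cases "\<exists>z\<in>cube n. \<not> g z")
    case True
    then obtain z S where "z \<in> cube n" "\<not> g z" "S \<subseteq> {..<n}" "card S = 0" "certifies n g S z"
      using "0.prems"(2) unfolding certificate_le_def by fastforce
    then have "S = {}" using finite_subset[of S "{..<n}"] by simp
    then show ?thesis
      using \<open>certifies n g S z\<close> \<open>\<not> g z\<close> unfolding certifies_def
      by (intro poly_deg_le_constant_on_cube[of _ _ False]) auto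
  qed (auto intro: poly_deg_le_constant_on_cube[of _ _ True])
next
  case (Suc b)
  show ?case
  proof (cases "\<exists>w\<in>cube n. g w")
    case True
    then obtain w m where w: "w \<in> cube n" "g w" and m: "m \<subseteq> {..<n}" "card m \<le> a" "certifies n g m w"
      using Suc.prems(1) unfolding certificate_le_def by blast
    have "poly_deg_le n (a * b) (\<lambda>x. if g (override_on x (\<lambda>i. i \<in> R) m) then 1 else 0)" for R
      by (intro Suc.IH certificate_le_override_on m(1) Suc.prems(1)
          certificate_le_override_on_certificate[OF m(1) w m(3) Suc.prems(2)])
    then have "poly_deg_le n (card m + a * b) (\<lambda>x. (if \<forall>i\<in>m. x i = (i \<in> R) then 1 else 0) *
        (if g (override_on x (\<lambda>i. i \<in> R) m) then 1 else 0))" for R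
      by (intro poly_deg_le_mult poly_deg_le_agree_indicator m(1))
    then have "poly_deg_le n (a * Suc b) (\<lambda>x. (if \<forall>i\<in>m. x i = (i \<in> R) then 1 else 0) *
        (if g (override_on x (\<lambda>i. i \<in> R) m) then 1 else 0))" for R
      by (rule poly_deg_le_mono) (use m(2) in simp)
    moreover have "finite m" using m(1) finite_subset by blast
    ultimately have "poly_deg_le n (a * Suc b) (\<lambda>x. \<Sum>R\<in>Pow m. (if \<forall>i\<in>m. x i = (i \<in> R) then 1 else 0) *
        (if g (override_on x (\<lambda>i. i \<in> R) m) then 1 else 0))"
      by (intro poly_deg_le_sum) auto
    then show ?thesis
      by (rule poly_deg_le_cong) (rule indicator_split_on[OF \<open>finite m\<close>, symmetric])
  qed (auto intro: poly_deg_le_constant_on_cube[of _ _ False])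
qed

section \<open>Univariate polynomials small at the integers\<close>

lemma lagrange_interpolation:
  fixes q :: "'a :: field poly" and x :: "nat \<Rightarrow> 'a"
  assumes deg: "degree q \<le> d" and inj: "inj_on x {..d}"
  shows "poly q z = (\<Sum>j\<le>d. poly q (x j) * (\<Prod>i\<in>{..d}-{j}. (z - x i) / (x j - x i)))"
proof -
  define L where "L j = smult (1 / (\<Prod>i\<in>{..d}-{j}. (x j - x i))) (\<Prod>i\<in>{..d}-{j}. [:- x i, 1:])" for j
  define I where "I = (\<Sum>j\<le>d. smult (poly q (x j)) (L j))"
  have polyL: "poly (L j) z = (\<Prod>i\<in>{..d}-{j}. (z - x i) / (x j - x i))" for j z
  proof -
    have "poly (L j) z = (\<Prod>i\<in>{..d}-{j}. (z - x i)) / (\<Prod>i\<in>{..d}-{j}. (x j - x i))"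
      unfolding L_def by (simp add: poly_prod)
    then show ?thesis by (simp add: prod_dividef)
  qed
  have degL: "degree (L j) \<le> d" if "j \<le> d" for j
  proof -
    have "degree (\<Prod>i\<in>{..d}-{j}. [:- x i, 1:]) \<le> (\<Sum>i\<in>{..d}-{j}. degree [:- x i, 1:])"
      using degree_prod_sum_le[of "{..d}-{j}" "\<lambda>i. [:- x i, 1:]"] by (simp add: o_def)
    also have "\<dots> = card ({..d}-{j})" by simp
    also have "\<dots> = d" using that by simp
    finally show ?thesis unfolding L_def using degree_smult_le order.trans by blast
  qed
  have degI: "degree I \<le> d" unfolding I_def
    by (rule degree_sum_le) (use degL degree_smult_le order.trans in auto)
  have Lnode: "poly (L j) (x k) = (if j = k then 1 else 0)" if "j \<le> d" "k \<le> d" for j k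
  proof (cases "j = k")
    case True
    have "(\<Prod>i\<in>{..d}-{j}. (x k - x i) / (x j - x i)) = 1"
      using True inj that by (intro prod.neutral) (auto simp: inj_on_def)
    then show ?thesis using True polyL by simp
  next
    case False
    have "(\<Prod>i\<in>{..d}-{j}. (x k - x i) / (x j - x i)) = 0"
      using False that by (intro prod_zero) auto
    then show ?thesis using False polyL by simp
  qed
  have Inode: "poly I (x k) = poly q (x k)" if "k \<le> d" for k
  proof -
    have "poly I (x k) = (\<Sum>j\<le>d. poly q (x j) * poly (L j) (x k))" unfolding I_def by (simp add: poly_sum)
    also have "\<dots> = poly q (x k) * poly (L k) (x k)"
      by (rule sum_eq_single[where g="\<lambda>j. poly q (x j) * poly (L j) (x k)"]) (use that Lnode in auto)
    also have "\<dots> = poly q (x k)" using Lnode that by simp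
    finally show ?thesis .
  qed
  have "I = q"
    by (rule poly_eqI_degree[of "x ` {..d}"]) (use Inode degI deg card_image[OF inj] in auto)
  then have "poly q z = poly I z" by simp
  also have "\<dots> = (\<Sum>j\<le>d. poly q (x j) * poly (L j) z)" unfolding I_def by (simp add: poly_sum)
  finally show ?thesis using polyL by simp
qed

lemma prod_remove_times_eq_fact:
  fixes j d :: nat
  assumes "1 \<le> j" "j \<le> d"
  shows "(\<Prod>i\<in>{1..d}-{j}. i) * j = fact d"
proof -
  from assms have "(\<Prod>i\<in>{1..d}. i) = j * (\<Prod>i\<in>{1..d}-{j}. i)" by (intro prod.remove) auto
  then show ?thesis by (simp add: fact_prod mult.commute)
qed

lemma prod_shift_remove_eq_fact:
  fixes j d :: nat
  assumes "1 \<le> j" "j \<le> d"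
  shows "(\<Prod>i\<in>{1..d}-{j}. i + j) * (2 * j * fact j) = fact (d + j)"
proof -
  from assms have "(\<Prod>i\<in>{1..d}. i + j) = (j + j) * (\<Prod>i\<in>{1..d}-{j}. i + j)" by (subst prod.remove) auto
  moreover have "(\<Prod>i\<in>{1..d}. i + j) = \<Prod>{1 + j..d + j}"
    using prod.shift_bounds_cl_nat_ivl[of "\<lambda>i. i" 1 j d] by simp
  moreover have "fact (d + j) = fact j * \<Prod>{Suc j..d + j}" by (rule fact_eq_fact_times) simp
  ultimately have "fact (d + j) = fact j * ((j + j) * (\<Prod>i\<in>{1..d}-{j}. i + j))" by simp
  then show ?thesis by (simp add: algebra_simps)
qed

lemma prod_distance_remove_eq_fact:
  fixes j d :: nat
  assumes j: "1 \<le> j" "j \<le> d"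
  shows "(\<Prod>i\<in>{1..d}-{j}. if i < j then j - i else i - j) = fact (j - 1) * fact (d - j)"
proof -
  have split: "{1..d}-{j} = {1..<j} \<union> {j+1..d}" using j by auto
  have "(\<Prod>i\<in>{1..d}-{j}. if i < j then j - i else i - j) =
     (\<Prod>i\<in>{1..<j}. if i < j then j - i else i - j) * (\<Prod>i\<in>{j+1..d}. if i < j then j - i else i - j)"
    unfolding split by (rule prod.union_disjoint) auto
  also have "(\<Prod>i\<in>{1..<j}. if i < j then j - i else i - j) = (\<Prod>i\<in>{1..<j}. j - i)"
    by (rule prod.cong) auto
  also have "\<dots> = (\<Prod>i\<in>{1..<j}. j - (j + 1 - Suc i))"
    by (rule prod.atLeastLessThan_rev)
  also have "\<dots> = (\<Prod>i\<in>{1..<j}. i)" by (rule prod.cong) auto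
  also have "\<dots> = fact (j - 1)" using j by (simp add: fact_prod atLeastLessThanSuc_atLeastAtMost[symmetric])
  also have "(\<Prod>i\<in>{j+1..d}. if i < j then j - i else i - j) = (\<Prod>i\<in>{1 + j..(d - j) + j}. i - j)"
    using j by (intro prod.cong) auto
  also have "\<dots> = (\<Prod>i\<in>{1..d - j}. i)" by (subst prod.shift_bounds_cl_nat_ivl) simp
  also have "\<dots> = fact (d - j)" by (simp add: fact_prod)
  finally show ?thesis .
qed

lemma fact_square_le:
  fixes j d :: nat
  assumes j: "j \<le> d"
  shows "fact d * fact d \<le> (fact (d - j) * fact (d + j) :: nat)"
proof -
  have f1: "fact d = fact (d - j) * \<Prod>{Suc (d - j)..d}" by (rule fact_eq_fact_times) simp
  have f2: "fact (d + j) = fact d * \<Prod>{Suc d..d + j}" by (rule fact_eq_fact_times) simp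
  have "\<Prod>{Suc (d - j)..d} = (\<Prod>i\<in>{1..j}. i + (d - j))"
    using prod.shift_bounds_cl_nat_ivl[of "\<lambda>i. i" 1 "d - j" j] j by simp
  also have "\<dots> \<le> (\<Prod>i\<in>{1..j}. i + d)" by (intro prod_mono) auto
  also have "\<dots> = \<Prod>{Suc d..d + j}"
    using prod.shift_bounds_cl_nat_ivl[of "\<lambda>i. i" 1 d j] by (simp add: add.commute)
  finally have "\<Prod>{Suc (d - j)..d} \<le> \<Prod>{Suc d..d + j}" .
  then have "fact d * \<Prod>{Suc (d - j)..d} \<le> fact d * \<Prod>{Suc d..d + j}" by simp
  then show ?thesis by (subst (2) f1, subst f2) (simp add: mult_ac)
qed

lemma prod_remove_square_le:
  fixes j d :: nat
  assumes j: "1 \<le> j" "j \<le> d"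
  shows "(\<Prod>i\<in>{1..d}-{j}. i) ^ 2 \<le>
    2 * (\<Prod>i\<in>{1..d}-{j}. if i < j then j - i else i - j) * (\<Prod>i\<in>{1..d}-{j}. i + j)"
proof -
  define A where "A = (\<Prod>i\<in>{1..d}-{j}. i)"
  define Q where "Q = (\<Prod>i\<in>{1..d}-{j}. i + j)"
  have a: "A * j = fact d" using prod_remove_times_eq_fact[OF j] A_def by simp
  have q: "Q * (2 * j * fact j) = fact (d + j)" using prod_shift_remove_eq_fact[OF j] Q_def by simp
  have fj: "fact j = j * (fact (j - 1) :: nat)" using j by (cases j) auto
  have "A^2 * (2 * j * fact j) = 2 * fact (j - 1) * (A * j) * (A * j)" by (simp add: fj power2_eq_square mult_ac)
  also have "\<dots> = 2 * fact (j - 1) * (fact d * fact d)" by (simp add: a)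
  also have "\<dots> \<le> 2 * fact (j - 1) * (fact (d - j) * fact (d + j))" using fact_square_le[of j d] j by simp
  also have "\<dots> = (2 * (fact (j - 1) * fact (d - j)) * Q) * (2 * j * fact j)" by (simp add: q[symmetric] mult_ac)
  finally have le: "A^2 * (2 * j * fact j) \<le> (2 * (fact (j - 1) * fact (d - j)) * Q) * (2 * j * fact j)" .
  have "0 < 2 * j * fact j" using j by simp
  then have "A^2 \<le> 2 * (fact (j - 1) * fact (d - j)) * Q" using le mult_le_cancel2 by blast
  then show ?thesis using prod_distance_remove_eq_fact[OF j] A_def Q_def by simp
qed

text \<open>The product equals \<open>2 (d!)\<^sup>2 / ((d - j)! (d + j)!)\<close>.\<close>

lemma prod_square_ratio_le_two:
  fixes j d :: nat
  assumes j: "1 \<le> j" "j \<le> d"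
  shows "(\<Prod>i\<in>{1..d}-{j}. (real i)^2 / \<bar>(real i)^2 - (real j)^2\<bar>) \<le> 2"
proof -
  define A where "A = (\<Prod>i\<in>{1..d}-{j}. i)"
  define P where "P = (\<Prod>i\<in>{1..d}-{j}. if i < j then j - i else i - j)"
  define Q where "Q = (\<Prod>i\<in>{1..d}-{j}. i + j)"
  have num: "(\<Prod>i\<in>{1..d}-{j}. (real i)^2) = real (A^2)"
    unfolding A_def by (simp add: prod_power_distrib)
  have pt: "\<bar>(real i)^2 - (real j)^2\<bar> = real (if i < j then j - i else i - j) * real (i + j)" for i
  proof -
    have "(real i)^2 - (real j)^2 = (real i - real j) * (real i + real j)"
      by (simp add: power2_eq_square algebra_simps)
    moreover have "\<bar>real i - real j\<bar> = real (if i < j then j - i else i - j)"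
      by (auto simp: of_nat_diff)
    ultimately show ?thesis by (simp add: abs_mult)
  qed
  have den: "(\<Prod>i\<in>{1..d}-{j}. \<bar>(real i)^2 - (real j)^2\<bar>) = real P * real Q"
    unfolding P_def Q_def pt by (simp add: prod.distrib)
  have Ppos: "P > 0" unfolding P_def by (intro prod_pos) auto
  have Qpos: "Q > 0" unfolding Q_def using j by (intro prod_pos) auto
  have "real (A^2) \<le> 2 * real P * real Q"
  proof -
    have "A^2 \<le> 2*P*Q" using prod_remove_square_le[OF j] unfolding A_def P_def Q_def .
    then have "real (A^2) \<le> real (2*P*Q)" by (simp only: of_nat_le_iff)
    then show ?thesis by simp
  qed
  then have "real (A^2) / (real P * real Q) \<le> 2"
    using Ppos Qpos by (simp add: divide_le_eq mult.assoc)
  moreover have "(\<Prod>i\<in>{1..d}-{j}. (real i)^2 / \<bar>(real i)^2 - (real j)^2\<bar>) =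
     (\<Prod>i\<in>{1..d}-{j}. (real i)^2) / (\<Prod>i\<in>{1..d}-{j}. \<bar>(real i)^2 - (real j)^2\<bar>)"
    by (rule prod_dividef)
  ultimately show ?thesis unfolding num den by simp
qed

lemma sum_inverse_squares_le_two: "(\<Sum>i=1..d. 1 / (real i)^2) \<le> 2"
proof -
  have "(\<Sum>i=1..d. 1 / (real i)^2) \<le> 2 - 2 / (real d + 1)"
  proof (induction d)
    case (Suc d)
    define t where "t = real d + 1"
    have t: "t \<ge> 1" unfolding t_def by simp
    have "1 / t^2 = 2 / (2 * t * t)" using t by (simp add: power2_eq_square)
    also have "\<dots> \<le> 2 / (t * (t + 1))"
      using t by (intro frac_le) (auto simp: algebra_simps intro: add_pos_nonneg)
    also have "\<dots> = 2 / t - 2 / (t + 1)" using t by (simp add: field_simps)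
    finally have "1 / t^2 \<le> 2 / t - 2 / (t + 1)" .
    then show ?case using Suc unfolding t_def by (simp add: add.assoc add.commute)
  qed simp
  moreover have "0 \<le> 2 / (real d + 1)" by simp
  ultimately show ?thesis by linarith
qed

lemma prod_one_plus_inverse_squares_le:
  assumes "S \<subseteq> {1..d}"
  shows "(\<Prod>i\<in>S. 1 + 1 / (real i)^2) \<le> 9"
proof -
  have fin: "finite S" using assms finite_subset by blast
  have "(\<Prod>i\<in>S. 1 + 1 / (real i)^2) \<le> (\<Prod>i\<in>S. exp (1 / (real i)^2))"
    by (intro prod_mono) (auto intro: add_nonneg_nonneg)
  also have "\<dots> = exp (\<Sum>i\<in>S. 1 / (real i)^2)" by (simp add: exp_sum fin)
  also have "\<dots> \<le> exp (\<Sum>i=1..d. 1 / (real i)^2)"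
    by (subst exp_le_cancel_iff, rule sum_mono2) (use assms in auto)
  also have "\<dots> \<le> exp 2"
    using sum_inverse_squares_le_two[of d] by simp
  also have "\<dots> = exp 1 * exp 1" by (simp flip: exp_add)
  also have "\<dots> \<le> 3 * 3" using exp_le by (intro mult_mono) auto
  finally show ?thesis by simp
qed

text \<open>Interpolation nodes \<open>1 + K i\<^sup>2\<close>, \<open>i = 0..d\<close>, all in \<open>[1, 1 + K d\<^sup>2]\<close>: the quadratic
  spacing makes the Lagrange weights at \<open>0\<close> have total absolute value at most \<open>1 + 72/K\<close>.\<close>

definition node :: "nat \<Rightarrow> nat \<Rightarrow> real" where
  "node K i = 1 + real K * (real i)^2"

definition weight :: "nat \<Rightarrow> nat \<Rightarrow> nat \<Rightarrow> real" where
  "weight K d j = (\<Prod>i\<in>{..d}-{j}. (0 - node K i) / (node K j - node K i))"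

lemma node_pos: "node K i > 0"
  unfolding node_def by (simp add: add_pos_nonneg)

lemma node_diff: "node K i - node K j = real K * ((real i)^2 - (real j)^2)"
  unfolding node_def by (simp add: algebra_simps)

lemma inj_on_node: "K \<ge> 1 \<Longrightarrow> inj_on (node K) A"
proof (rule inj_onI)
  fix i j assume K: "K \<ge> 1" and "node K i = node K j"
  then have "real K * ((real i)^2 - (real j)^2) = 0" using node_diff[of K i j] by simp
  then have "(real i)^2 = (real j)^2" using K by simp
  then have "real i = real j" by (subst (asm) power2_eq_iff_nonneg) auto
  then show "i = j" by simp
qed

lemma node_ratio_le:
  assumes "K \<ge> 1" "i \<ge> 1" "i \<noteq> j"
  shows "node K i / \<bar>node K i - node K j\<bar> \<le> (1 + 1 / (real i)^2) * ((real i)^2 / \<bar>(real i)^2 - (real j)^2\<bar>)"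
proof -
  have "(real i)^2 \<noteq> (real j)^2" using assms(3) by (subst power2_eq_iff_nonneg) auto
  then have pos: "\<bar>(real i)^2 - (real j)^2\<bar> > 0" by simp
  have "\<bar>node K i - node K j\<bar> = real K * \<bar>(real i)^2 - (real j)^2\<bar>"
    using node_diff[of K i j] by (simp add: abs_mult)
  then have "node K i / \<bar>node K i - node K j\<bar> = (1 / real K + (real i)^2) / \<bar>(real i)^2 - (real j)^2\<bar>"
    using assms(1) by (simp add: node_def field_simps)
  also have "\<dots> \<le> (1 + (real i)^2) / \<bar>(real i)^2 - (real j)^2\<bar>"
    using assms(1) pos by (intro divide_right_mono) auto
  also have "\<dots> = (1 + 1 / (real i)^2) * ((real i)^2 / \<bar>(real i)^2 - (real j)^2\<bar>)"
    using assms(2) pos by (simp add: field_simps)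
  finally show ?thesis .
qed

lemma abs_weight_le:
  assumes K: "K \<ge> 1" and j: "1 \<le> j" "j \<le> d"
  shows "\<bar>weight K d j\<bar> \<le> 18 / (real K * (real j)^2)"
proof -
  let ?r = "\<lambda>i. node K i / \<bar>node K i - node K j\<bar>"
  have "\<bar>(0 - node K i) / (node K j - node K i)\<bar> = ?r i" for i
    using node_pos[of K i] by (simp add: abs_divide abs_minus_commute)
  then have "\<bar>weight K d j\<bar> = (\<Prod>i\<in>insert 0 ({1..d}-{j}). ?r i)"
    unfolding weight_def abs_prod using j by (intro prod.cong) auto
  also have "\<dots> = ?r 0 * (\<Prod>i\<in>{1..d}-{j}. ?r i)"
    by (rule prod.insert) auto
  also have "?r 0 = 1 / (real K * (real j)^2)"
    using node_diff[of K 0 j] by (simp add: node_def)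
  finally have split: "\<bar>weight K d j\<bar> = 1 / (real K * (real j)^2) * (\<Prod>i\<in>{1..d}-{j}. ?r i)" .
  have "(\<Prod>i\<in>{1..d}-{j}. ?r i) \<le>
      (\<Prod>i\<in>{1..d}-{j}. (1 + 1 / (real i)^2) * ((real i)^2 / \<bar>(real i)^2 - (real j)^2\<bar>))"
    using node_ratio_le[OF K] by (intro prod_mono) (auto intro: less_imp_le[OF node_pos])
  also have "\<dots> = (\<Prod>i\<in>{1..d}-{j}. 1 + 1 / (real i)^2) *
      (\<Prod>i\<in>{1..d}-{j}. (real i)^2 / \<bar>(real i)^2 - (real j)^2\<bar>)"
    by (rule prod.distrib)
  also have "\<dots> \<le> 9 * 2"
    by (intro mult_mono prod_one_plus_inverse_squares_le prod_square_ratio_le_two j prod_nonneg) auto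
  finally show ?thesis unfolding split by (simp add: divide_right_mono)
qed

lemma sum_weight: "K \<ge> 1 \<Longrightarrow> (\<Sum>j\<le>d. weight K d j) = 1"
  using lagrange_interpolation[of "1 :: real poly" d "node K" 0] inj_on_node[of K "{..d}"] unfolding weight_def by simp

lemma weight_0_nonneg: "weight K d 0 \<ge> 0"
  unfolding weight_def
proof (rule prod_nonneg)
  fix i assume "i \<in> {..d}-{0}"
  then have "node K 0 - node K i \<le> 0" unfolding node_def by simp
  then show "0 \<le> (0 - node K i) / (node K 0 - node K i)"
    using node_pos[of K i] by (intro divide_nonpos_nonpos) auto
qed

lemma sum_abs_weight_le:
  assumes K: "K \<ge> 1"
  shows "(\<Sum>j\<le>d. \<bar>weight K d j\<bar>) \<le> 1 + 72 / real K"
proof -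
  have split: "{..d} = insert 0 {1..d}" by auto
  have s1: "(\<Sum>j\<le>d. weight K d j) = weight K d 0 + (\<Sum>j\<in>{1..d}. weight K d j)"
    unfolding split by (rule sum.insert) auto
  have s2: "(\<Sum>j\<le>d. \<bar>weight K d j\<bar>) = \<bar>weight K d 0\<bar> + (\<Sum>j\<in>{1..d}. \<bar>weight K d j\<bar>)"
    unfolding split by (rule sum.insert) auto
  have b: "(\<Sum>j\<in>{1..d}. \<bar>weight K d j\<bar>) \<le> 36 / real K"
  proof -
    have "(\<Sum>j\<in>{1..d}. \<bar>weight K d j\<bar>) \<le> (\<Sum>j\<in>{1..d}. 18 / real K * (1 / (real j)^2))"
      by (rule sum_mono) (use abs_weight_le[OF K] in auto)
    also have "\<dots> = 18 / real K * (\<Sum>j=1..d. 1 / (real j)^2)" by (simp add: sum_distrib_left)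
    also have "\<dots> \<le> 18 / real K * 2"
      by (rule mult_left_mono[OF sum_inverse_squares_le_two]) simp
    finally show ?thesis by simp
  qed
  have "- (\<Sum>j\<in>{1..d}. weight K d j) \<le> (\<Sum>j\<in>{1..d}. \<bar>weight K d j\<bar>)"
    by (rule order.trans[OF _ sum_abs[of "weight K d" "{1..d}"]]) simp
  then have "weight K d 0 \<le> 1 + (\<Sum>j\<in>{1..d}. \<bar>weight K d j\<bar>)" using s1 sum_weight[OF K, of d] by linarith
  then show ?thesis using s2 b weight_0_nonneg[of K d] by simp
qed

lemma poly_small_on_integers_bound:
  fixes q :: "real poly" and K d k :: nat
  assumes K: "K \<ge> 1" and deg: "degree q \<le> d" and q0: "1 \<le> \<bar>poly q 0\<bar>"
    and qt: "\<And>t::nat. 1 \<le> t \<Longrightarrow> t \<le> k \<Longrightarrow> \<bar>poly q (real t)\<bar> \<le> eps"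
    and eps: "eps * (1 + 72 / real K) < 1"
  shows "k \<le> K * d^2"
proof (rule ccontr)
  assume "\<not> k \<le> K * d^2"
  then have kb: "1 + K * d^2 \<le> k" by simp
  have node: "node K j = real (1 + K * j^2)" for j unfolding node_def by simp
  have qn: "\<bar>poly q (node K j)\<bar> \<le> eps" if "j \<le> d" for j
  proof -
    have "K * j^2 \<le> K * d^2" using that by (simp add: power_mono)
    then have "1 + K * j^2 \<le> k" using kb by linarith
    then show ?thesis unfolding node by (intro qt) auto
  qed
  have e0: "eps \<ge> 0" using qn[of 0] by simp
  have "poly q 0 = (\<Sum>j\<le>d. poly q (node K j) * weight K d j)"
    unfolding weight_def by (rule lagrange_interpolation[OF deg inj_on_node[OF K]])
  then have "\<bar>poly q 0\<bar> \<le> (\<Sum>j\<le>d. \<bar>poly q (node K j)\<bar> * \<bar>weight K d j\<bar>)"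
    by (simp add: sum_abs[THEN order.trans] abs_mult)
  also have "\<dots> \<le> (\<Sum>j\<le>d. eps * \<bar>weight K d j\<bar>)"
    by (rule sum_mono) (use qn in \<open>auto intro: mult_right_mono\<close>)
  also have "\<dots> = eps * (\<Sum>j\<le>d. \<bar>weight K d j\<bar>)" by (simp add: sum_distrib_left)
  also have "\<dots> \<le> eps * (1 + 72 / real K)" using sum_abs_weight_le[OF K] e0 by (intro mult_left_mono)
  finally show False using q0 eps by simp
qed

section \<open>Symmetrization\<close>

definition binomial_poly :: "nat \<Rightarrow> real poly" where
  "binomial_poly t = smult (1 / fact t) (\<Prod>l<t. [:- real l, 1:])"

lemma poly_binomial_poly: "poly (binomial_poly t) (real j) = real (j choose t)"
proof -
  have "poly (binomial_poly t) (real j) = (\<Prod>l<t. real j - real l) / fact t"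
    unfolding binomial_poly_def by (simp add: poly_prod)
  also have "\<dots> = real j gchoose t" by (simp add: gbinomial_prod_rev atLeast0LessThan)
  finally show ?thesis by (simp add: binomial_gbinomial)
qed

lemma degree_binomial_poly: "degree (binomial_poly t) \<le> t"
proof -
  have "degree (\<Prod>l<t. [:- real l, 1:]) \<le> (\<Sum>l<t. degree [:- real l, (1::real):])"
    using degree_prod_sum_le[of "{..<t}" "\<lambda>l. [:- real l, 1:]"] by (simp add: o_def)
  then show ?thesis unfolding binomial_poly_def using degree_smult_le order.trans by fastforce
qed

lemma card_supersets:
  assumes B: "finite B" and S: "S \<subseteq> B" and j: "card S \<le> j"
  shows "card {A. A \<subseteq> B \<and> card A = j \<and> S \<subseteq> A} = (card B - card S) choose (j - card S)"
proof -
  have finS: "finite S" using B S finite_subset by blast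
  have "bij_betw (\<lambda>A. A - S) {A. A \<subseteq> B \<and> card A = j \<and> S \<subseteq> A} {A'. A' \<subseteq> B - S \<and> card A' = j - card S}"
  proof (rule bij_betw_byWitness[where f'="\<lambda>A'. A' \<union> S"])
    show "\<forall>a\<in>{A. A \<subseteq> B \<and> card A = j \<and> S \<subseteq> A}. a - S \<union> S = a" by auto
    show "\<forall>a'\<in>{A'. A' \<subseteq> B - S \<and> card A' = j - card S}. a' \<union> S - S = a'" by auto
    show "(\<lambda>A. A - S) ` {A. A \<subseteq> B \<and> card A = j \<and> S \<subseteq> A} \<subseteq> {A'. A' \<subseteq> B - S \<and> card A' = j - card S}"
    proof
      fix A' assume "A' \<in> (\<lambda>A. A - S) ` {A. A \<subseteq> B \<and> card A = j \<and> S \<subseteq> A}"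
      then obtain A where A: "A \<subseteq> B" "card A = j" "S \<subseteq> A" "A' = A - S" by blast
      have "finite A" using A(1) B finite_subset by blast
      then show "A' \<in> {A'. A' \<subseteq> B - S \<and> card A' = j - card S}"
        using A by (auto simp: card_Diff_subset finS)
    qed
    show "(\<lambda>A'. A' \<union> S) ` {A'. A' \<subseteq> B - S \<and> card A' = j - card S} \<subseteq> {A. A \<subseteq> B \<and> card A = j \<and> S \<subseteq> A}"
    proof
      fix A assume "A \<in> (\<lambda>A'. A' \<union> S) ` {A'. A' \<subseteq> B - S \<and> card A' = j - card S}"
      then obtain A' where A': "A' \<subseteq> B - S" "card A' = j - card S" "A = A' \<union> S" by blast
      have "finite A'" using A'(1) B finite_subset by blast
      then have "card A = j" using A' j finS by (subst A'(3), subst card_Un_disjoint) auto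
      then show "A \<in> {A. A \<subseteq> B \<and> card A = j \<and> S \<subseteq> A}" using A' S by auto
    qed
  qed
  then have "card {A. A \<subseteq> B \<and> card A = j \<and> S \<subseteq> A} = card {A'. A' \<subseteq> B - S \<and> card A' = j - card S}"
    by (rule bij_betw_same_card)
  also have "\<dots> = (card B - card S) choose (j - card S)"
    using n_subsets[of "B - S" "j - card S"] B S finS by (simp add: card_Diff_subset)
  finally show ?thesis .
qed

lemma card_supersets_mult_choose:
  assumes B: "finite B" and S: "S \<subseteq> B"
  shows "card {A. A \<subseteq> B \<and> card A = j \<and> S \<subseteq> A} * (card B choose card S) = (card B choose j) * (j choose card S)"
proof (cases "card S \<le> j")
  case False
  have "card S \<le> card A" if "A \<subseteq> B" "S \<subseteq> A" for A
    using that B by (intro card_mono) (auto intro: finite_subset)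
  then have "{A. A \<subseteq> B \<and> card A = j \<and> S \<subseteq> A} = {}" using False by auto
  then have "card {A. A \<subseteq> B \<and> card A = j \<and> S \<subseteq> A} = 0" by (simp only: card.empty)
  then show ?thesis using False by (simp add: binomial_eq_0)
next
  case True
  note card_eq = card_supersets[OF B S True]
  show ?thesis
  proof (cases "j \<le> card B")
    case True
    then show ?thesis unfolding card_eq using choose_mult[OF \<open>card S \<le> j\<close> True] by (simp add: mult.commute)
  next
    case False
    have "card S \<le> card B" using card_mono[OF B S] .
    then have "card B - card S < j - card S" using False True by simp
    then show ?thesis unfolding card_eq using False by (simp add: binomial_eq_0)
  qed
qed

lemma sum_monomial_subsets:
  assumes "finite B" "finite S"
  shows "(\<Sum>A | A \<subseteq> B \<and> card A = j. monomial S (\<lambda>i. i \<in> A)) =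
    (if S \<subseteq> B then real (card B choose j) * real (j choose card S) / real (card B choose card S) else 0)"
proof -
  let ?X = "{A. A \<subseteq> B \<and> card A = j}"
  have "finite ?X" using assms(1) by simp
  have "(\<Sum>A\<in>?X. monomial S (\<lambda>i. i \<in> A)) = (\<Sum>A\<in>?X. if S \<subseteq> A then 1 else 0)"
    by (intro sum.cong) (auto simp: monomial_eq[OF assms(2)])
  also have "\<dots> = (\<Sum>A | A \<subseteq> B \<and> card A = j \<and> S \<subseteq> A. 1)"
    by (subst sum.inter_filter[symmetric, OF \<open>finite ?X\<close>]) (simp add: conj_assoc)
  also have "\<dots> = real (card {A. A \<subseteq> B \<and> card A = j \<and> S \<subseteq> A})"
    by (rule real_of_card[symmetric])
  finally have sum_eq: "(\<Sum>A\<in>?X. monomial S (\<lambda>i. i \<in> A)) = \<dots>" .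
  show ?thesis
  proof (cases "S \<subseteq> B")
    case True
    then have "0 < card B choose card S" using card_mono[OF assms(1)] by simp
    moreover have "real (card {A. A \<subseteq> B \<and> card A = j \<and> S \<subseteq> A}) * real (card B choose card S) =
        real (card B choose j) * real (j choose card S)"
      using card_supersets_mult_choose[OF assms(1) True, of j] by (metis of_nat_mult)
    ultimately show ?thesis using True sum_eq by (simp add: field_simps)
  next
    case False
    then have "{A. A \<subseteq> B \<and> card A = j \<and> S \<subseteq> A} = {}" by auto
    then have "card {A. A \<subseteq> B \<and> card A = j \<and> S \<subseteq> A} = 0" by (simp only: card.empty)
    then show ?thesis using False sum_eq by simp
  qed
qed

lemma symmetrization:
  assumes p: "poly_deg_le n d p" and B: "B \<subseteq> {..<n}"
  shows "\<exists>Q. degree Q \<le> d \<and>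
    (\<forall>j. (\<Sum>A | A \<subseteq> B \<and> card A = j. p (\<lambda>i. i \<in> A)) = real (card B choose j) * poly Q (real j))"
proof -
  obtain c where c: "\<forall>x\<in>cube n. p x = (\<Sum>S\<in>small_sets n d. c S * monomial S x)"
    using p unfolding poly_deg_le_iff by blast
  have "finite B" using B finite_subset by blast
  define co where "co S = (if S \<subseteq> B then c S / real (card B choose card S) else 0)" for S
  define Q where "Q = (\<Sum>S\<in>small_sets n d. smult (co S) (binomial_poly (card S)))"
  have "degree Q \<le> d" unfolding Q_def
  proof (rule degree_sum_le)
    fix S assume "S \<in> small_sets n d"
    then show "degree (smult (co S) (binomial_poly (card S))) \<le> d"
      using degree_smult_le[of "co S"] degree_binomial_poly[of "card S"] unfolding small_sets_def by force
  qed simp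
  moreover have "(\<Sum>A | A \<subseteq> B \<and> card A = j. p (\<lambda>i. i \<in> A)) = real (card B choose j) * poly Q (real j)" for j
  proof -
    have "(\<Sum>A | A \<subseteq> B \<and> card A = j. p (\<lambda>i. i \<in> A)) =
        (\<Sum>A | A \<subseteq> B \<and> card A = j. \<Sum>S\<in>small_sets n d. c S * monomial S (\<lambda>i. i \<in> A))"
      using c set_indicator_in_cube B by (intro sum.cong) auto
    also have "\<dots> = (\<Sum>S\<in>small_sets n d. c S * (\<Sum>A | A \<subseteq> B \<and> card A = j. monomial S (\<lambda>i. i \<in> A)))"
      by (subst sum.swap) (simp add: sum_distrib_left)
    also have "\<dots> = (\<Sum>S\<in>small_sets n d. real (card B choose j) * (co S * real (j choose card S)))"
      using \<open>finite B\<close> by (intro sum.cong) (auto simp: sum_monomial_subsets finite_of_small_sets co_def)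
    also have "\<dots> = real (card B choose j) * poly Q (real j)"
      by (simp add: Q_def poly_sum poly_binomial_poly sum_distrib_left)
    finally show ?thesis .
  qed
  ultimately show ?thesis by blast
qed

lemma card_le_if_poly_small_near_point:
  fixes K :: nat
  assumes p: "poly_deg_le n d p" and B: "B \<subseteq> {..<n}" and z: "z \<in> cube n" and pz: "1 \<le> \<bar>p z\<bar>"
    and pA: "\<And>A. A \<subseteq> B \<Longrightarrow> A \<noteq> {} \<Longrightarrow> \<bar>p (flip z (\<lambda>i. i \<in> A))\<bar> \<le> eps"
    and K: "K \<ge> 1" and eps: "eps * (1 + 72 / real K) < 1"
  shows "card B \<le> K * d^2"
proof -
  obtain Q where "degree Q \<le> d" and Q: "\<And>j. (\<Sum>A | A \<subseteq> B \<and> card A = j. p (flip z (\<lambda>i. i \<in> A))) =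
      real (card B choose j) * poly Q (real j)"
    using symmetrization[OF poly_deg_le_flip[OF z p] B] by (auto simp: flip_def)
  have "finite B" using B finite_subset by blast
  have "{A. A \<subseteq> B \<and> card A = 0} = {{}}" using \<open>finite B\<close> by (auto dest: finite_subset)
  moreover have "flip z (\<lambda>i. i \<in> {}) = z" unfolding flip_def by simp
  ultimately have "poly Q 0 = p z" using Q[of 0] by simp
  moreover have "\<bar>poly Q (real j)\<bar> \<le> eps" if "1 \<le> j" "j \<le> card B" for j
  proof -
    have "real (card B choose j) * \<bar>poly Q (real j)\<bar> = \<bar>\<Sum>A | A \<subseteq> B \<and> card A = j. p (flip z (\<lambda>i. i \<in> A))\<bar>"
      by (simp add: Q abs_mult)
    also have "\<dots> \<le> (\<Sum>A | A \<subseteq> B \<and> card A = j. eps)"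
    proof (intro order.trans[OF sum_abs] sum_mono)
      fix A assume "A \<in> {A. A \<subseteq> B \<and> card A = j}"
      moreover from this have "A \<noteq> {}" using that by auto
      ultimately show "\<bar>p (flip z (\<lambda>i. i \<in> A))\<bar> \<le> eps" using pA by blast
    qed
    also have "\<dots> = real (card B choose j) * eps" by (simp add: n_subsets[OF \<open>finite B\<close>])
    finally show ?thesis using that by simp
  qed
  ultimately show ?thesis
    using poly_small_on_integers_bound[OF K \<open>degree Q \<le> d\<close> _ _ eps] pz by auto
qed

section \<open>Monotone and unate functions\<close>

definition separates :: "real \<Rightarrow> nat \<Rightarrow> ((nat \<Rightarrow> bool) \<Rightarrow> bool) \<Rightarrow> ((nat \<Rightarrow> bool) \<Rightarrow> real) \<Rightarrow> bool" where
  "separates eps n f p \<longleftrightarrow> (\<forall>x\<in>cube n. (\<not> f x \<longrightarrow> \<bar>p x\<bar> \<le> eps) \<and> (f x \<longrightarrow> \<bar>p x\<bar> \<ge> 1))"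

text \<open>A minimal 1-input below \<open>x\<close> certifies \<open>x\<close>; all points strictly below it are 0-inputs,
  so symmetrizing around it bounds its size.\<close>

lemma increasing_certificate_le:
  fixes K :: nat
  assumes mono: "monotone_on (cube n) (\<le>) (\<le>) g"
    and p: "poly_deg_le n d p" "separates eps n g p"
    and K: "K \<ge> 1" and eps: "eps * (1 + 72 / real K) < 1"
  shows "certificate_le n g True (K * d^2)"
  unfolding certificate_le_def
proof (intro ballI impI)
  fix x assume x: "x \<in> cube n" "g x = True"
  define T where "T = {i. i < n \<and> x i}"
  define F where "F S \<longleftrightarrow> S \<subseteq> T \<and> g (\<lambda>i. i \<in> S)" for S
  have "(\<lambda>i. i \<in> T) = x" using x(1) unfolding T_def cube_def by (auto simp: not_le[symmetric])
  then have "F T" unfolding F_def using x by simp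
  then obtain S where "F S" and S_min: "\<And>S'. F S' \<Longrightarrow> card S \<le> card S'"
    using ex_has_least_nat[of F T card] by blast
  then have ST: "S \<subseteq> T" and gS: "g (\<lambda>i. i \<in> S)" unfolding F_def by auto
  have Sn: "S \<subseteq> {..<n}" using ST unfolding T_def by auto
  have "card S \<le> K * d^2"
  proof (rule card_le_if_poly_small_near_point[OF p(1) Sn set_indicator_in_cube[OF Sn] _ _ K eps])
    show "1 \<le> \<bar>p (\<lambda>i. i \<in> S)\<bar>" using p(2) set_indicator_in_cube[OF Sn] gS unfolding separates_def by simp
    fix A assume A: "A \<subseteq> S" "A \<noteq> {}"
    have "finite S" using Sn finite_subset by blast
    then have "card (S - A) < card S" using A by (intro psubset_card_mono) auto
    then have "\<not> F (S - A)" using S_min[of "S - A"] by linarith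
    then have "\<not> g (\<lambda>i. i \<in> S - A)" using ST unfolding F_def by blast
    moreover have "(\<lambda>i. i \<in> S - A) \<in> cube n" using Sn by (intro set_indicator_in_cube) blast
    moreover have "flip (\<lambda>i. i \<in> S) (\<lambda>i. i \<in> A) = (\<lambda>i. i \<in> S - A)" using A(1) unfolding flip_def by auto
    ultimately show "\<bar>p (flip (\<lambda>i. i \<in> S) (\<lambda>i. i \<in> A))\<bar> \<le> eps"
      using p(2) unfolding separates_def by simp
  qed
  moreover have "certifies n g S x"
    unfolding certifies_def
  proof (intro ballI impI)
    fix y assume y: "y \<in> cube n" "\<forall>i\<in>S. y i = x i"
    have "y i" if "i \<in> S" for i using y(2) that ST unfolding T_def by auto
    then have "(\<lambda>i. i \<in> S) \<le> y" unfolding le_fun_def le_bool_def by blast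
    then have "g (\<lambda>i. i \<in> S) \<le> g y" using monotone_onD[OF mono set_indicator_in_cube[OF Sn] y(1)] by blast
    then show "g y = g x" using gS x(2) by simp
  qed
  ultimately show "\<exists>S\<subseteq>{..<n}. card S \<le> K * d^2 \<and> certifies n g S x" using Sn by blast
qed

lemma unate_increasing:
  assumes "unate n f"
  shows "\<exists>a\<in>cube n. \<exists>g. monotone_on (cube n) (\<le>) (\<le>) g \<and> (\<forall>x\<in>cube n. f x = g (flip a x))"
proof -
  obtain a g where a: "a \<in> cube n" and f: "\<forall>x\<in>cube n. f x = g (flip a x)"
    and mono: "monotone_on (cube n) (\<le>) (\<le>) g \<or> monotone_on (cube n) (\<le>) (\<ge>) g"
    using assms unfolding unate_def flip_def by blast
  from mono show ?thesis
  proof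
    assume "monotone_on (cube n) (\<le>) (\<le>) g"
    then show ?thesis using a f by blast
  next
    assume anti: "monotone_on (cube n) (\<le>) (\<ge>) g"
    define top where "top = (\<lambda>i::nat. i < n)"
    have top: "top \<in> cube n" unfolding top_def cube_def by simp
    have "monotone_on (cube n) (\<le>) (\<le>) (\<lambda>x. g (flip top x))"
    proof (rule monotone_onI)
      fix x y assume "x \<in> cube n" "y \<in> cube n" "x \<le> y"
      moreover from this have "flip top y \<le> flip top x"
        unfolding flip_def top_def cube_def le_fun_def by auto
      ultimately show "g (flip top x) \<le> g (flip top y)"
        using monotone_onD[OF anti] flip_in_cube[OF top] by blast
    qed
    moreover have "flip top (flip (flip a top) x) = flip a x" for x
      unfolding flip_def by auto
    then have "f x = g (flip top (flip (flip a top) x))" if "x \<in> cube n" for x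
      using f that by simp
    ultimately show ?thesis using flip_in_cube[OF a top] by blast
  qed
qed

lemma unate_not:
  assumes "unate n f"
  shows "unate n (\<lambda>x. \<not> f x)"
proof -
  obtain a g where "a \<in> cube n" "\<forall>x\<in>cube n. f x = g (\<lambda>i. x i \<noteq> a i)"
    and mono: "monotone_on (cube n) (\<le>) (\<le>) g \<or> monotone_on (cube n) (\<le>) (\<ge>) g"
    using assms unfolding unate_def by blast
  moreover have "monotone_on (cube n) (\<le>) (\<ge>) (\<lambda>x. \<not> g x) \<or> monotone_on (cube n) (\<le>) (\<le>) (\<lambda>x. \<not> g x)"
    using mono unfolding monotone_on_def le_bool_def by blast
  ultimately show ?thesis unfolding unate_def by (intro bexI[of _ a] exI[of _ "\<lambda>x. \<not> g x"]) auto
qed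

lemma unate_certificate_le:
  fixes K :: nat
  assumes "unate n f" and p: "poly_deg_le n d p" "separates eps n f p"
    and K: "K \<ge> 1" and eps: "eps * (1 + 72 / real K) < 1"
  shows "certificate_le n f True (K * d^2)"
proof -
  obtain a g where a: "a \<in> cube n" and mono: "monotone_on (cube n) (\<le>) (\<le>) g"
    and f: "\<And>x. x \<in> cube n \<Longrightarrow> f x = g (flip a x)"
    using unate_increasing[OF assms(1)] by blast
  have "separates eps n g (\<lambda>y. p (flip a y))"
    unfolding separates_def
  proof
    fix y assume "y \<in> cube n"
    then have "flip a y \<in> cube n" "g y = f (flip a y)" using f[of "flip a y"] flip_in_cube[OF a] by auto
    then show "(\<not> g y \<longrightarrow> \<bar>p (flip a y)\<bar> \<le> eps) \<and> (g y \<longrightarrow> 1 \<le> \<bar>p (flip a y)\<bar>)"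
      using p(2) unfolding separates_def by simp
  qed
  then have "certificate_le n g True (K * d^2)"
    by (intro increasing_certificate_le[OF mono poly_deg_le_flip[OF a p(1)] _ K eps])
  with a f show ?thesis by (rule certificate_le_flip)
qed

lemma N_deg_witness:
  assumes "0 \<le> eps"
  shows "\<exists>p. poly_deg_le n (N_deg eps n f) p \<and> separates eps n f p"
  unfolding N_deg_def separates_def
proof (rule LeastI_ex)
  show "\<exists>d p. poly_deg_le n d p \<and> (\<forall>x\<in>cube n. (\<not> f x \<longrightarrow> \<bar>p x\<bar> \<le> eps) \<and> (f x \<longrightarrow> 1 \<le> \<bar>p x\<bar>))"
    using assms poly_deg_le_dim[of n "\<lambda>x. if f x then 1 else 0"]
    by (intro exI[of _ n] exI[of _ "\<lambda>x. if f x then 1 else 0"]) auto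
qed

lemma approx_deg_le_exact: "poly_deg_le n d (\<lambda>x. if f x then 1 else 0) \<Longrightarrow> approx_deg n f \<le> d"
  unfolding approx_deg_def by (rule Least_le) auto

lemma approx_deg_unate_le:
  fixes K :: nat
  assumes "unate n f" and "0 \<le> eps" and K: "K \<ge> 1" and eps: "eps * (1 + 72 / real K) < 1"
  shows "approx_deg n f \<le> K * N_deg eps n f ^ 2 * (K * N_deg eps n (\<lambda>x. \<not> f x) ^ 2)"
proof -
  obtain p r where p: "poly_deg_le n (N_deg eps n f) p" "separates eps n f p"
    and r: "poly_deg_le n (N_deg eps n (\<lambda>x. \<not> f x)) r" "separates eps n (\<lambda>x. \<not> f x) r"
    using N_deg_witness[OF assms(2)] by blast
  have "certificate_le n f True (K * N_deg eps n f ^ 2)"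
    by (rule unate_certificate_le[OF assms(1) p K eps])
  moreover have "certificate_le n f False (K * N_deg eps n (\<lambda>x. \<not> f x) ^ 2)"
    using unate_certificate_le[OF unate_not[OF assms(1)] r K eps] by (simp add: certificate_le_not)
  ultimately show ?thesis by (intro approx_deg_le_exact poly_deg_le_certificate_complexity)
qed

lemma exists_interpolation_constant:
  assumes "0 \<le> eps" "eps < 1"
  shows "\<exists>K::nat. K \<ge> 1 \<and> eps * (1 + 72 / real K) < 1"
proof -
  define K :: nat where "K = nat \<lceil>72 / (1 - eps)\<rceil> + 1"
  have "72 / (1 - eps) < real K" unfolding K_def by linarith
  then have "72 < (1 - eps) * real K" using assms(2) by (simp add: field_simps)
  moreover have "real K \<ge> 1" unfolding K_def by simp
  ultimately have "72 / real K < 1 - eps" by (simp add: field_simps)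
  moreover have "eps * (72 / real K) \<le> 72 / real K"
    using assms by (intro mult_left_le_one_le) auto
  ultimately have "eps * (1 + 72 / real K) < 1" by (simp add: distrib_left)
  then show ?thesis unfolding K_def by auto
qed

theorem lemma3p9:
  fixes eps :: real
  assumes "0 < eps" and "eps < 1"
  shows "\<exists>C :: real. \<forall>n f. unate n f \<longrightarrow>
           real (approx_deg n f) \<le> C * real (M_deg eps n f) ^ 4"
proof -
  obtain K :: nat where K: "K \<ge> 1" "eps * (1 + 72 / real K) < 1"
    using exists_interpolation_constant[OF less_imp_le[OF assms(1)] assms(2)] by blast
  have "real (approx_deg n f) \<le> real K ^ 2 * real (M_deg eps n f) ^ 4" if "unate n f" for n f
  proof -
    let ?M = "M_deg eps n f"
    have "N_deg eps n f \<le> ?M" "N_deg eps n (\<lambda>x. \<not> f x) \<le> ?M" unfolding M_deg_def by auto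
    then have "K * N_deg eps n f ^ 2 * (K * N_deg eps n (\<lambda>x. \<not> f x) ^ 2) \<le> K * ?M ^ 2 * (K * ?M ^ 2)"
      by (intro mult_le_mono order.refl power_mono) simp_all
    moreover have "approx_deg n f \<le> K * N_deg eps n f ^ 2 * (K * N_deg eps n (\<lambda>x. \<not> f x) ^ 2)"
      using approx_deg_unate_le[OF that less_imp_le[OF assms(1)] K] .
    moreover have "K * ?M ^ 2 * (K * ?M ^ 2) = K ^ 2 * ?M ^ 4"
      by (simp only: power2_eq_square power4_eq_xxxx mult_ac)
    ultimately have "approx_deg n f \<le> K ^ 2 * ?M ^ 4" by linarith
    then show ?thesis by (simp flip: of_nat_power of_nat_mult)
  qed
  then show ?thesis by blast
qed

end
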